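(* Let $U\subset(0,1)^d$ be open, $A,B>0$, $C\ge0$, $r$ a positive integer or $+\infty$, and $l\ge1$ an integer. If $f_1,\ldots,f_l:U\to\mathbb{R}$ are $(A,B,C)$-mild up to order $r$, then the product $f_1\cdots f_l$ is $(lA,B^l,C)$-mild up to order $r$. Likewise, if $f_1,\ldots,f_l$ are weakly $(A,B,C)$-mild up to order $r$, then $f_1\cdots f_l$ is weakly $(lA,B^l,C)$-mild up to order $r$.
   Context: For $U$ open, $g:U\to\mathbb{R}$ is $(A,B,C)$-mild up to order $r$ if it is $C^r$ and $|g^{(\nu)}(x)|\le B^{C+1}A^{|\nu|}|\nu|!^{C+1}$ for all $x\in U$ and $\nu\in\mathbb{N}^d$ with $|\nu|\le r$; it is weakly $(A,B,C)$-mild up to order $r$ (for $U\subset(0,1)^d$) if it is $C^r$ and $|g^{(\nu)}(x)|\le B^{C+1}A^{|\nu|}|\nu|!^{C+1}/x^\nu$ for the same $x,\nu$. Here $g^{(\nu)}=\partial^{|\nu|}g/\partial x_1^{\nu_1}\cdots\partial x_d^{\nu_d}$, $|\nu|=\sum\nu_i$, $x^\nu=\prod x_i^{\nu_i}$; order $+\infty$ means $C^\infty$ and all $\nu$. *)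

theory Defs
  imports "HOL-Analysis.Analysis" "HOL-Library.Extended_Nat"
begin

text \<open>Points of R^d are modelled as real^'n (d = CARD('n)).
  Partial derivative in direction of the i-th coordinate.\<close>
definition pd :: "'n::finite \<Rightarrow> (real^'n \<Rightarrow> real) \<Rightarrow> real^'n \<Rightarrow> real" where
  "pd i h x = deriv (\<lambda>t. h (x + t *\<^sub>R axis i 1)) 0"

text \<open>Iterated partial derivatives along a list of coordinate indices
  (the multi-index nu is given by the multiplicities of indices in the list).\<close>
fun pds :: "'n::finite list \<Rightarrow> (real^'n \<Rightarrow> real) \<Rightarrow> real^'n \<Rightarrow> real" where
  "pds [] h = h"
| "pds (i # is) h = pd i (pds is h)"

definition Cr_on :: "enat \<Rightarrow> (real^'n::finite) set \<Rightarrow> (real^'n \<Rightarrow> real) \<Rightarrow> bool" where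
  "Cr_on r U g \<longleftrightarrow>
     (\<forall>is. enat (length is) \<le> r \<longrightarrow>
        continuous_on U (pds is g) \<and>
        (enat (length is) < r \<longrightarrow>
           (\<forall>i. \<forall>x\<in>U. (\<lambda>t. pds is g (x + t *\<^sub>R axis i 1)) differentiable (at 0))))"

definition mild :: "real \<Rightarrow> real \<Rightarrow> real \<Rightarrow> enat \<Rightarrow> (real^'n::finite) set \<Rightarrow> (real^'n \<Rightarrow> real) \<Rightarrow> bool" where
  "mild A B C r U g \<longleftrightarrow> Cr_on r U g \<and>
     (\<forall>x\<in>U. \<forall>is. enat (length is) \<le> r \<longrightarrow>
        \<bar>pds is g x\<bar> \<le> B powr (C + 1) * A ^ length is * (fact (length is)) powr (C + 1))"

definition weakly_mild :: "real \<Rightarrow> real \<Rightarrow> real \<Rightarrow> enat \<Rightarrow> (real^'n::finite) set \<Rightarrow> (real^'n \<Rightarrow> real) \<Rightarrow> bool" where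
  "weakly_mild A B C r U g \<longleftrightarrow> Cr_on r U g \<and>
     (\<forall>x\<in>U. \<forall>is. enat (length is) \<le> r \<longrightarrow>
        \<bar>pds is g x\<bar> \<le> B powr (C + 1) * A ^ length is * (fact (length is)) powr (C + 1)
                        / (\<Prod>i\<in>UNIV. (x $ i) ^ count_list is i))"

end

theory Submission
  imports Defs
begin

text \<open>Leibniz' rule writes \<open>\<partial>\<^sup>\<nu>(F G)\<close> as the sum of \<open>\<partial>\<^sup>\<alpha>F \<partial>\<^sup>\<beta>G\<close> over all ways of
  distributing the \<open>|\<nu>|\<close> differentiations between the two factors. Suppose
  \<open>|\<partial>\<^sup>\<alpha>F| \<le> K A^|\<alpha>| |\<alpha>|!^(C+1) c^\<alpha>\<close> and \<open>|\<partial>\<^sup>\<beta>G| \<le> L B^|\<beta>| |\<beta>|!^(C+1) c^\<beta>\<close> for a monomial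
  weight \<open>c\<close>. Since \<open>|\<alpha>|! |\<beta>|! \<le> |\<nu>|!\<close> and \<open>c^\<alpha> c^\<beta> = c^\<nu>\<close>, each term is at most
  \<open>K L A^|\<alpha>| B^|\<beta>| |\<nu>|!^(C+1) c^\<nu>\<close>, and the binomial theorem sums these to
  \<open>K L (A + B)^|\<nu>| |\<nu>|!^(C+1) c^\<nu>\<close>. Induction on the number of factors then gives
  \<open>K^l (l A)^|\<nu>|\<close> for a product of \<open>l\<close> functions. Mild functions are the case \<open>c = 1\<close>,
  weakly mild ones the case \<open>c\<^sub>i = 1 / x\<^sub>i\<close>.\<close>

text \<open>A multi-index decomposition \<open>\<nu> = \<alpha> + \<beta>\<close> occurs \<open>\<nu> choose \<alpha>\<close> times among the splits
  of a word for \<open>\<nu>\<close>, which accounts for the binomial coefficients of Leibniz' rule.\<close>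

fun splits :: "'a list \<Rightarrow> ('a list \<times> 'a list) list" where
  "splits [] = [([], [])]"
| "splits (i # is) = map (\<lambda>(a, b). (i # a, b)) (splits is) @ map (\<lambda>(a, b). (a, i # b)) (splits is)"

lemma length_splits: "p \<in> set (splits is) \<Longrightarrow> length (fst p) + length (snd p) = length is"
  by (induction "is" arbitrary: p) auto

lemma count_list_splits:
  "p \<in> set (splits is) \<Longrightarrow> count_list (fst p) i + count_list (snd p) i = count_list is i"
  by (induction "is" arbitrary: p) auto

lemma sum_splits_power:
  fixes a b :: "'b::comm_semiring_1"
  shows "(\<Sum>p\<leftarrow>splits is. a ^ length (fst p) * b ^ length (snd p)) = (a + b) ^ length is"
proof (induction "is")
  case (Cons i "is")
  have "(\<Sum>p\<leftarrow>splits (i # is). a ^ length (fst p) * b ^ length (snd p)) =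
      (a + b) * (\<Sum>p\<leftarrow>splits is. a ^ length (fst p) * b ^ length (snd p))"
    by (simp add: o_def case_prod_beta sum_list_const_mult algebra_simps)
  then show ?case using Cons by simp
qed simp

lemma fact_mult_fact_le: "(fact m * fact n :: 'a::linordered_semidom) \<le> fact (m + n)"
proof -
  have "fact m * fact n * (m + n choose m) = (fact (m + n) :: nat)"
    using binomial_fact_lemma[of m "m + n"] by simp
  moreover have "m + n choose m \<ge> 1"
    using zero_less_binomial[of m "m + n"] by linarith
  ultimately have "fact m * fact n \<le> (fact (m + n) :: nat)"
    by (metis mult.right_neutral mult_le_mono2)
  then have "of_nat (fact m * fact n) \<le> (of_nat (fact (m + n)) :: 'a)"
    by (simp only: of_nat_le_iff)
  then show ?thesis
    by simp
qed

lemma DERIV_sum_list: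
  "(\<And>p. p \<in> set ps \<Longrightarrow> DERIV (h p) x :> h' p) \<Longrightarrow> DERIV (\<lambda>t. \<Sum>p\<leftarrow>ps. h p t) x :> (\<Sum>p\<leftarrow>ps. h' p)"
  by (induction ps) (auto intro!: DERIV_add)

lemma continuous_on_sum_list:
  fixes h :: "'p \<Rightarrow> 'a::topological_space \<Rightarrow> 'b::topological_monoid_add"
  shows "(\<And>p. p \<in> set ps \<Longrightarrow> continuous_on U (h p)) \<Longrightarrow> continuous_on U (\<lambda>x. \<Sum>p\<leftarrow>ps. h p x)"
  by (induction ps) (auto intro!: continuous_intros)

lemma eventually_line_in_open:
  fixes x v :: "'a::real_normed_vector"
  assumes "open U" "x \<in> U"
  shows "eventually (\<lambda>t. x + t *\<^sub>R v \<in> U) (nhds (0::real))"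
proof -
  have "((\<lambda>t::real. x + t *\<^sub>R v) \<longlongrightarrow> x + 0 *\<^sub>R v) (nhds 0)"
    by (intro tendsto_intros) (simp add: filterlim_ident)
  then show ?thesis
    using assms by (auto simp: tendsto_def)
qed

lemma DERIV_line_pd:
  "(\<lambda>t. g (x + t *\<^sub>R axis i 1)) differentiable (at 0) \<Longrightarrow>
    DERIV (\<lambda>t. g (x + t *\<^sub>R axis i 1)) 0 :> pd i g x"
  unfolding pd_def by (simp add: DERIV_deriv_iff_real_differentiable)

lemma pd_eqI: "DERIV (\<lambda>t. g (x + t *\<^sub>R axis i 1)) 0 :> D \<Longrightarrow> pd i g x = D"
  unfolding pd_def by (rule DERIV_imp_deriv)

lemma DERIV_line_sum_products:
  fixes H :: "real^'n::finite \<Rightarrow> real"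
  assumes "open U" "x \<in> U"
    and H: "\<forall>y\<in>U. H y = (\<Sum>p\<leftarrow>ps. P p y * Q p y)"
    and P: "\<And>p. p \<in> set ps \<Longrightarrow> (\<lambda>t. P p (x + t *\<^sub>R axis i 1)) differentiable (at 0)"
    and Q: "\<And>p. p \<in> set ps \<Longrightarrow> (\<lambda>t. Q p (x + t *\<^sub>R axis i 1)) differentiable (at 0)"
  shows "DERIV (\<lambda>t. H (x + t *\<^sub>R axis i 1)) 0 :>
    (\<Sum>p\<leftarrow>ps. pd i (P p) x * Q p x + P p x * pd i (Q p) x)"
proof -
  have sum: "DERIV (\<lambda>t. \<Sum>p\<leftarrow>ps. P p (x + t *\<^sub>R axis i 1) * Q p (x + t *\<^sub>R axis i 1)) 0 :>
      (\<Sum>p\<leftarrow>ps. pd i (P p) x * Q p x + P p x * pd i (Q p) x)"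
  proof (rule DERIV_sum_list)
    fix p assume "p \<in> set ps"
    from DERIV_mult[OF DERIV_line_pd[OF P[OF this]] DERIV_line_pd[OF Q[OF this]]]
    show "DERIV (\<lambda>t. P p (x + t *\<^sub>R axis i 1) * Q p (x + t *\<^sub>R axis i 1)) 0 :>
        pd i (P p) x * Q p x + P p x * pd i (Q p) x"
      by (simp add: mult.commute)
  qed
  have eq: "eventually (\<lambda>t. H (x + t *\<^sub>R axis i 1) =
      (\<Sum>p\<leftarrow>ps. P p (x + t *\<^sub>R axis i 1) * Q p (x + t *\<^sub>R axis i 1))) (nhds 0)"
    using eventually_line_in_open[OF assms(1,2), of "axis i 1"] H by (auto elim!: eventually_mono)
  show ?thesis
    using DERIV_cong_ev[OF refl eq refl] sum by blast
qed

lemma Cr_on_continuous_on_pds: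
  "Cr_on r U g \<Longrightarrow> enat (length js) \<le> r \<Longrightarrow> continuous_on U (pds js g)"
  unfolding Cr_on_def by blast

lemma Cr_on_differentiable_pds:
  "Cr_on r U g \<Longrightarrow> enat (length js) < r \<Longrightarrow> x \<in> U \<Longrightarrow>
    (\<lambda>t. pds js g (x + t *\<^sub>R axis i 1)) differentiable (at 0)"
  unfolding Cr_on_def by (meson order.strict_implies_order)

lemma pds_mult:
  assumes "open U" and F: "Cr_on r U F" and G: "Cr_on r U G"
  shows "enat (length is) \<le> r \<Longrightarrow> x \<in> U \<Longrightarrow>
    pds is (\<lambda>y. F y * G y) x = (\<Sum>p\<leftarrow>splits is. pds (fst p) F x * pds (snd p) G x)"
proof (induction "is" arbitrary: x)
  case (Cons i "is")
  have len: "enat (length is) < r"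
    using Cons.prems(1) by (simp add: Suc_ile_eq)
  have shorter: "enat (length (fst p)) < r" "enat (length (snd p)) < r" if "p \<in> set (splits is)" for p
    using length_splits[OF that] by (auto intro!: order.strict_trans1[OF _ len])
  have IH: "\<forall>y\<in>U. pds is (\<lambda>y. F y * G y) y = (\<Sum>p\<leftarrow>splits is. pds (fst p) F y * pds (snd p) G y)"
    using Cons.IH len by (simp add: order.strict_implies_order)
  have "DERIV (\<lambda>t. pds is (\<lambda>y. F y * G y) (x + t *\<^sub>R axis i 1)) 0 :>
      (\<Sum>p\<leftarrow>splits is. pd i (pds (fst p) F) x * pds (snd p) G x + pds (fst p) F x * pd i (pds (snd p) G) x)"
  proof (rule DERIV_line_sum_products[OF \<open>open U\<close> Cons.prems(2) IH])
    fix p assume "p \<in> set (splits is)"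
    from shorter[OF this] show
      "(\<lambda>t. pds (fst p) F (x + t *\<^sub>R axis i 1)) differentiable (at 0)"
      "(\<lambda>t. pds (snd p) G (x + t *\<^sub>R axis i 1)) differentiable (at 0)"
      using Cons.prems(2) by (auto intro: Cr_on_differentiable_pds[OF F] Cr_on_differentiable_pds[OF G])
  qed
  then have "pd i (pds is (\<lambda>y. F y * G y)) x =
      (\<Sum>p\<leftarrow>splits is. pd i (pds (fst p) F) x * pds (snd p) G x + pds (fst p) F x * pd i (pds (snd p) G) x)"
    by (rule pd_eqI)
  then show ?case
    by (simp add: o_def case_prod_beta sum_list_addf)
qed simp

lemma Cr_on_mult:
  assumes "open U" and F: "Cr_on r U F" and G: "Cr_on r U G"
  shows "Cr_on r U (\<lambda>x. F x * G x)"
  unfolding Cr_on_def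
proof (intro allI ballI impI conjI)
  fix "is" :: "'a list" assume len: "enat (length is) \<le> r"
  have shorter: "enat (length (fst p)) \<le> enat (length is)" "enat (length (snd p)) \<le> enat (length is)"
    if "p \<in> set (splits is)" for p
    using length_splits[OF that] by auto
  have Leibniz: "\<forall>y\<in>U. pds is (\<lambda>x. F x * G x) y = (\<Sum>p\<leftarrow>splits is. pds (fst p) F y * pds (snd p) G y)"
    using pds_mult[OF \<open>open U\<close> F G len] by blast
  have "continuous_on U (\<lambda>y. \<Sum>p\<leftarrow>splits is. pds (fst p) F y * pds (snd p) G y)"
  proof (rule continuous_on_sum_list)
    fix p assume "p \<in> set (splits is)"
    from order.trans[OF shorter(1)[OF this] len] order.trans[OF shorter(2)[OF this] len]
    show "continuous_on U (\<lambda>y. pds (fst p) F y * pds (snd p) G y)"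
      by (intro continuous_on_mult Cr_on_continuous_on_pds[OF F] Cr_on_continuous_on_pds[OF G])
  qed
  then show "continuous_on U (pds is (\<lambda>x. F x * G x))"
    using continuous_on_cong[OF refl, of U "pds is (\<lambda>x. F x * G x)"] Leibniz by simp
  fix i x assume short: "enat (length is) < r" and x: "x \<in> U"
  have "DERIV (\<lambda>t. pds is (\<lambda>x. F x * G x) (x + t *\<^sub>R axis i 1)) 0 :>
      (\<Sum>p\<leftarrow>splits is. pd i (pds (fst p) F) x * pds (snd p) G x + pds (fst p) F x * pd i (pds (snd p) G) x)"
  proof (rule DERIV_line_sum_products[OF \<open>open U\<close> x Leibniz])
    fix p assume p: "p \<in> set (splits is)"
    show "(\<lambda>t. pds (fst p) F (x + t *\<^sub>R axis i 1)) differentiable (at 0)"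
      using Cr_on_differentiable_pds[OF F order.strict_trans1[OF shorter(1)[OF p] short] x] .
    show "(\<lambda>t. pds (snd p) G (x + t *\<^sub>R axis i 1)) differentiable (at 0)"
      using Cr_on_differentiable_pds[OF G order.strict_trans1[OF shorter(2)[OF p] short] x] .
  qed
  then show "(\<lambda>t. pds is (\<lambda>x. F x * G x) (x + t *\<^sub>R axis i 1)) differentiable (at 0)"
    unfolding real_differentiable_def by blast
qed

definition monomial_weight :: "('a::finite \<Rightarrow> 'b::comm_monoid_mult) \<Rightarrow> 'a list \<Rightarrow> 'b" where
  "monomial_weight c is = (\<Prod>i\<in>UNIV. c i ^ count_list is i)"

lemma monomial_weight_splits:
  "p \<in> set (splits is) \<Longrightarrow> monomial_weight c (fst p) * monomial_weight c (snd p) = monomial_weight c is"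
  unfolding monomial_weight_def
  by (simp add: prod.distrib[symmetric] power_add[symmetric] count_list_splits)

lemma monomial_weight_nonneg:
  "(\<And>i. 0 \<le> c i) \<Longrightarrow> 0 \<le> (monomial_weight c is :: 'b::linordered_semidom)"
  unfolding monomial_weight_def by (simp add: prod_nonneg)

lemma abs_sum_splits_le:
  fixes u v :: "'a::finite list \<Rightarrow> real"
  assumes u: "\<And>a. length a \<le> length is \<Longrightarrow>
      \<bar>u a\<bar> \<le> K * A ^ length a * fact (length a) powr (C + 1) * monomial_weight c a"
    and v: "\<And>b. length b \<le> length is \<Longrightarrow>
      \<bar>v b\<bar> \<le> L * B ^ length b * fact (length b) powr (C + 1) * monomial_weight c b"
    and "0 \<le> K" "0 \<le> L" "0 \<le> A" "0 \<le> B" "0 \<le> C" "\<And>i. 0 \<le> c i"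
  shows "\<bar>\<Sum>p\<leftarrow>splits is. u (fst p) * v (snd p)\<bar> \<le>
    K * L * (A + B) ^ length is * fact (length is) powr (C + 1) * monomial_weight c is"
proof -
  define M where "M = K * L * monomial_weight c is * fact (length is) powr (C + 1)"
  have summand: "\<bar>u (fst p) * v (snd p)\<bar> \<le> A ^ length (fst p) * B ^ length (snd p) * M"
    if p: "p \<in> set (splits is)" for p
  proof -
    obtain a b where ab: "p = (a, b)" by fastforce
    have n: "length a + length b = length is"
      using length_splits[OF p] ab by simp
    have "\<bar>u a * v b\<bar> \<le> (K * A ^ length a * fact (length a) powr (C + 1) * monomial_weight c a) *
        (L * B ^ length b * fact (length b) powr (C + 1) * monomial_weight c b)"
      unfolding abs_mult using u[of a] v[of b] n by (intro mult_mono) (auto intro: order.trans[OF abs_ge_zero])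
    also have "\<dots> = K * L * A ^ length a * B ^ length b * monomial_weight c is *
        (fact (length a) * fact (length b)) powr (C + 1)"
      using monomial_weight_splits[OF p, of c] ab by (simp add: powr_mult mult_ac)
    also have "\<dots> \<le> K * L * A ^ length a * B ^ length b * monomial_weight c is * fact (length is) powr (C + 1)"
      using fact_mult_fact_le[of "length a" "length b"] n assms(3-8)
      by (intro mult_left_mono powr_mono2) (auto intro!: mult_nonneg_nonneg monomial_weight_nonneg)
    finally show ?thesis
      using ab by (simp add: M_def mult_ac)
  qed
  have "\<bar>\<Sum>p\<leftarrow>splits is. u (fst p) * v (snd p)\<bar> \<le> (\<Sum>p\<leftarrow>splits is. \<bar>u (fst p) * v (snd p)\<bar>)"
    using sum_list_abs[of "map (\<lambda>p. u (fst p) * v (snd p)) (splits is)"] by (simp add: o_def)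
  also have "\<dots> \<le> (\<Sum>p\<leftarrow>splits is. A ^ length (fst p) * B ^ length (snd p) * M)"
    by (rule sum_list_mono) (rule summand)
  also have "\<dots> = (A + B) ^ length is * M"
    by (simp add: sum_list_mult_const sum_splits_power)
  finally show ?thesis
    by (simp add: M_def mult_ac)
qed

definition mild_scaled ::
    "real \<Rightarrow> real \<Rightarrow> real \<Rightarrow> enat \<Rightarrow> (real^'n::finite) set \<Rightarrow> (real^'n \<Rightarrow> 'n \<Rightarrow> real) \<Rightarrow> (real^'n \<Rightarrow> real) \<Rightarrow> bool"
  where "mild_scaled K A C r U c g \<longleftrightarrow> Cr_on r U g \<and>
     (\<forall>x\<in>U. \<forall>is. enat (length is) \<le> r \<longrightarrow>
        \<bar>pds is g x\<bar> \<le> K * A ^ length is * fact (length is) powr (C + 1) * monomial_weight (c x) is)"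

lemma mild_iff_mild_scaled: "mild A B C r U g \<longleftrightarrow> mild_scaled (B powr (C + 1)) A C r U (\<lambda>_ _. 1) g"
  by (simp add: mild_def mild_scaled_def monomial_weight_def)

lemma weakly_mild_iff_mild_scaled:
  "weakly_mild A B C r U g \<longleftrightarrow> mild_scaled (B powr (C + 1)) A C r U (\<lambda>x i. inverse (x $ i)) g"
  by (simp add: weakly_mild_def mild_scaled_def monomial_weight_def power_inverse
      prod_inversef[symmetric] divide_inverse o_def)

lemma mild_scaled_mult:
  fixes U :: "(real^'n::finite) set"
  assumes "open U" and c: "\<forall>x\<in>U. \<forall>i. 0 \<le> c x i"
    and "0 \<le> K" "0 \<le> L" "0 \<le> A" "0 \<le> B" "0 \<le> C"
    and F: "mild_scaled K A C r U c F" and G: "mild_scaled L B C r U c G"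
  shows "mild_scaled (K * L) (A + B) C r U c (\<lambda>x. F x * G x)"
  unfolding mild_scaled_def
proof (intro conjI ballI allI impI)
  have Cr: "Cr_on r U F" "Cr_on r U G"
    using F G unfolding mild_scaled_def by blast+
  then show "Cr_on r U (\<lambda>x. F x * G x)"
    using Cr_on_mult[OF \<open>open U\<close>] by blast
  fix x and "is" :: "'n list" assume x: "x \<in> U" and len: "enat (length is) \<le> r"
  have shorter: "enat (length js) \<le> r" if "length js \<le> length is" for js :: "'n list"
    using that by (auto intro!: order.trans[OF _ len])
  have "\<bar>\<Sum>p\<leftarrow>splits is. pds (fst p) F x * pds (snd p) G x\<bar> \<le>
      K * L * (A + B) ^ length is * fact (length is) powr (C + 1) * monomial_weight (c x) is"
    using F G x c shorter assms(3-7) by (intro abs_sum_splits_le) (auto simp: mild_scaled_def)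
  then show "\<bar>pds is (\<lambda>x. F x * G x) x\<bar> \<le>
      K * L * (A + B) ^ length is * fact (length is) powr (C + 1) * monomial_weight (c x) is"
    by (simp only: pds_mult[OF \<open>open U\<close> Cr len x])
qed

lemma mild_scaled_prod:
  assumes "open U" and c: "\<forall>x\<in>U. \<forall>i. 0 \<le> c x i" and "0 \<le> K" "0 \<le> A" "0 \<le> C"
  shows "1 \<le> l \<Longrightarrow> \<forall>j\<in>{1..l}. mild_scaled K A C r U c (f j) \<Longrightarrow>
    mild_scaled (K ^ l) (real l * A) C r U c (\<lambda>x. \<Prod>j=1..l. f j x)"
proof (induction l rule: nat_induct_at_least)
  case (Suc l)
  have "mild_scaled (K ^ l * K) (real l * A + A) C r U c (\<lambda>x. (\<Prod>j=1..l. f j x) * f (Suc l) x)"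
    using Suc assms by (intro mild_scaled_mult) auto
  then show ?case
    by (simp add: prod.cl_ivl_Suc algebra_simps)
qed simp

theorem mainTheorem7:
  fixes U :: "(real^'n::finite) set" and A B C :: real and r :: enat and l :: nat
    and f :: "nat \<Rightarrow> real^'n \<Rightarrow> real"
  assumes "open U" and "\<forall>x\<in>U. \<forall>i. 0 < x $ i \<and> x $ i < 1"
    and "A > 0" and "B > 0" and "C \<ge> 0" and "r \<ge> 1" and "l \<ge> 1"
  shows "((\<forall>j\<in>{1..l}. mild A B C r U (f j)) \<longrightarrow>
            mild (real l * A) (B ^ l) C r U (\<lambda>x. \<Prod>j=1..l. f j x))
       \<and> ((\<forall>j\<in>{1..l}. weakly_mild A B C r U (f j)) \<longrightarrow>
            weakly_mild (real l * A) (B ^ l) C r U (\<lambda>x. \<Prod>j=1..l. f j x))"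
proof -
  have K: "(B ^ l) powr (C + 1) = (B powr (C + 1)) ^ l"
    using \<open>B > 0\<close> by (simp add: powr_realpow[symmetric] powr_powr mult.commute)
  have "\<forall>x\<in>U. \<forall>i. 0 \<le> inverse (x $ i)"
    using assms(2) by (simp add: less_imp_le)
  then show ?thesis
    unfolding mild_iff_mild_scaled weakly_mild_iff_mild_scaled K
    using mild_scaled_prod[OF \<open>open U\<close> _ _ _ _ \<open>l \<ge> 1\<close>] assms(3-5) by simp
qed

end
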